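(* For every real $t>\frac32$ there exist unique $t_1>1$ and $t_2\in\mathbb R$ such that $$t^2-tt_1+t_1^2-(t_2-1)^2=0,\qquad 2tt_1-t-t_1+1-2t_2=0.$$ For such $t,t_1,t_2$ one has $t_2>t_1$. *)

theory Defs
  imports Complex_Main
begin

end

theory Submission
  imports Defs "HOL-Library.Quadratic_Discriminant"
begin

(* Solving the linear equation for t2 and substituting into the quadratic one leaves
   q(t1) = (2t-3)(2t+1) t1^2 - 2(2t+1)(t-1) t1 + (1-t)(3t+1) = 0.
   For t > 3/2 the leading coefficient is positive and q(1) = -3t^2 < 0, so q has exactly
   one root above 1.  Further t2 > t1 amounts to t1 > r = (t-1)/(2t-3); since also q(r) < 0,
   r lies strictly between the two roots of q, hence below t1. *)

lemma quadratic_eq_factor: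
  fixes a b c u y :: "'a::comm_ring_1"
  assumes "a * u^2 + b * u + c = 0"
  shows "a * y^2 + b * y + c = (y - u) * (a * y + a * u + b)"
proof -
  have "a * y^2 + b * y + c = a * y^2 + b * y + c - (a * u^2 + b * u + c)"
    using assms by simp
  also have "\<dots> = (y - u) * (a * y + a * u + b)"
    by (simp add: power2_eq_square algebra_simps)
  finally show ?thesis .
qed

lemma quadratic_unique_root_above:
  fixes a b c x :: real
  assumes "a > 0" and "a * x^2 + b * x + c < 0"
  shows "\<exists>!u. x < u \<and> a * u^2 + b * u + c = 0"
proof -
  have "discrim a b c = (2 * a * x + b)^2 - 4 * a * (a * x^2 + b * x + c)"
    by (simp add: discrim_def power2_eq_square algebra_simps)
  also have "\<dots> > 0"
    using assms mult_pos_neg[of "4 * a" "a * x^2 + b * x + c"] zero_le_power2[of "2 * a * x + b"]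
    by linarith
  finally obtain u where u: "a * u^2 + b * u + c = 0"
    using discriminant_nonneg_ex assms(1) by fastforce
  define v where "v = - u - b / a"
  have "a * y + a * u + b = a * (y - v)" for y
    using assms(1) by (simp add: v_def field_simps)
  then have factor: "a * y^2 + b * y + c = a * ((y - u) * (y - v))" for y
    using quadratic_eq_factor[OF u, of y] by (metis mult.left_commute)
  have roots: "a * y^2 + b * y + c = 0 \<longleftrightarrow> y = u \<or> y = v" for y
    using assms(1) by (simp add: factor)
  have "(x - u) * (x - v) < 0"
    using assms factor[of x] by (simp add: zero_less_mult_iff mult_less_0_iff)
  then have "x < u \<and> v < x \<or> x < v \<and> u < x"
    by (auto simp: mult_less_0_iff)
  then show ?thesis
    using roots by auto
qed

lemma quadratic_root_above_negative_point:
  fixes a b c x y u :: real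
  assumes "a > 0" and "a * x^2 + b * x + c < 0" and "a * y^2 + b * y + c < 0"
    and u: "a * u^2 + b * u + c = 0" and "x < u"
  shows "y < u"
proof (rule ccontr)
  assume "\<not> y < u"
  have "(x - u) * (a * x + a * u + b) < 0"
    using assms(2) quadratic_eq_factor[OF u, of x] by simp
  with \<open>x < u\<close> have "a * x + a * u + b > 0"
    by (simp add: mult_less_0_iff)
  moreover have "a * x < a * y"
    using \<open>a > 0\<close> \<open>x < u\<close> \<open>\<not> y < u\<close> by simp
  ultimately have "(y - u) * (a * y + a * u + b) \<ge> 0"
    using \<open>\<not> y < u\<close> by simp
  then show False
    using assms(3) quadratic_eq_factor[OF u, of y] by simp
qed

lemma ex1_pair_graph_iff:
  "(\<exists>!p. P (fst p) \<and> snd p = f (fst p)) \<longleftrightarrow> (\<exists>!x. P x)"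
  by (metis fst_conv prod.collapse snd_conv)

lemma system_iff_quadratic:
  fixes t u v :: real
  shows "(t^2 - t * u + u^2 - (v - 1)^2 = 0 \<and> 2 * t * u - t - u + 1 - 2 * v = 0) \<longleftrightarrow>
    v = (2 * t * u - t - u + 1) / 2 \<and>
    (2 * t - 3) * (2 * t + 1) * u^2 - 2 * (2 * t + 1) * (t - 1) * u + (1 - t) * (3 * t + 1) = 0"
proof (cases "v = (2 * t * u - t - u + 1) / 2")
  case True
  have "t^2 - t * u + u^2 - (v - 1)^2 =
    - ((2 * t - 3) * (2 * t + 1) * u^2 - 2 * (2 * t + 1) * (t - 1) * u + (1 - t) * (3 * t + 1)) / 4"
    unfolding True by (simp add: power2_eq_square field_simps)
  moreover have "2 * t * u - t - u + 1 - 2 * v = 0"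
    using True by simp
  ultimately show ?thesis
    using True by (simp only:) (auto simp: algebra_simps)
qed auto

(* r is the value of t1 for which the linear equation yields t2 = t1. *)
lemma eliminated_quadratic_neg_at_diagonal:
  fixes t :: real
  assumes "t > 3/2"
  defines "r \<equiv> (t - 1) / (2 * t - 3)"
  shows "(2 * t - 3) * (2 * t + 1) * r^2 - 2 * (2 * t + 1) * (t - 1) * r + (1 - t) * (3 * t + 1) < 0"
proof -
  have "2 * t - 3 \<noteq> 0"
    using assms by simp
  then have ar: "(2 * t - 3) * (2 * t + 1) * r = (2 * t + 1) * (t - 1)"
    by (simp add: r_def)
  have "(2 * t - 3) * (2 * t + 1) * r^2 - 2 * (2 * t + 1) * (t - 1) * r + (1 - t) * (3 * t + 1)
      = r * ((2 * t - 3) * (2 * t + 1) * r - 2 * (2 * t + 1) * (t - 1)) + (1 - t) * (3 * t + 1)"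
    by (simp add: power2_eq_square algebra_simps)
  also have "\<dots> = - (2 * t + 1) * (t - 1) * r + (1 - t) * (3 * t + 1)"
    unfolding ar by (simp add: algebra_simps)
  also have "\<dots> = - 4 * (t - 1) * (2 * t * (t - 1) - 1) / (2 * t - 3)"
    using \<open>2 * t - 3 \<noteq> 0\<close> by (simp add: r_def field_simps)
  also have "\<dots> < 0"
  proof -
    have "3/2 * (1/2) < t * (t - 1)"
      using assms by (intro mult_strict_mono) auto
    then show ?thesis
      using assms by (simp add: divide_neg_pos mult_neg_pos)
  qed
  finally show ?thesis .
qed

theorem lemma4p5:
  fixes t :: real
  assumes "t > 3/2"
  shows "(\<exists>!p :: real \<times> real. fst p > 1 \<and>
            t^2 - t * fst p + (fst p)^2 - (snd p - 1)^2 = 0 \<and>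
            2 * t * fst p - t - fst p + 1 - 2 * snd p = 0)
       \<and> (\<forall>t1 t2 :: real. t1 > 1 \<and>
            t^2 - t * t1 + t1^2 - (t2 - 1)^2 = 0 \<and>
            2 * t * t1 - t - t1 + 1 - 2 * t2 = 0 \<longrightarrow> t2 > t1)"
proof -
  define a where "a = (2 * t - 3) * (2 * t + 1)"
  define b where "b = - (2 * (2 * t + 1) * (t - 1))"
  define c where "c = (1 - t) * (3 * t + 1)"
  have system: "(t^2 - t * u + u^2 - (v - 1)^2 = 0 \<and> 2 * t * u - t - u + 1 - 2 * v = 0) \<longleftrightarrow>
      v = (2 * t * u - t - u + 1) / 2 \<and> a * u^2 + b * u + c = 0" for u v
    unfolding a_def b_def c_def using system_iff_quadratic by simp
  have "a > 0"
    using assms by (simp add: a_def)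
  have at_one: "a * 1^2 + b * 1 + c < 0"
    using assms by (simp add: a_def b_def c_def algebra_simps)
  define r where "r = (t - 1) / (2 * t - 3)"
  have at_r: "a * r^2 + b * r + c < 0"
    using eliminated_quadratic_neg_at_diagonal[OF assms] by (simp add: a_def b_def c_def r_def)
  have "\<exists>!u. 1 < u \<and> a * u^2 + b * u + c = 0"
    using quadratic_unique_root_above[OF \<open>a > 0\<close> at_one] .
  then have "\<exists>!p :: real \<times> real. (1 < fst p \<and> a * (fst p)^2 + b * fst p + c = 0) \<and>
      snd p = (2 * t * fst p - t - fst p + 1) / 2"
    by (rule ex1_pair_graph_iff[THEN iffD2])
  moreover have "t2 > t1"
    if "1 < t1" "t2 = (2 * t * t1 - t - t1 + 1) / 2" "a * t1^2 + b * t1 + c = 0" for t1 t2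
  proof -
    have "r < t1"
      using quadratic_root_above_negative_point[OF \<open>a > 0\<close> at_one at_r] that by simp
    then have "t - 1 < (2 * t - 3) * t1"
      using assms by (simp add: r_def pos_divide_less_eq mult.commute)
    then show ?thesis
      using that(2) by (simp add: algebra_simps)
  qed
  ultimately show ?thesis
    unfolding system by (auto simp: conj_ac)
qed

end
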